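(* If $\sigma : S \to A^\perp \parallel B$ and $\tau : T \to B^\perp \parallel C$ are backward sequential strategies (with $A, B, C$ arenas), so is $\tau \odot \sigma$.
   Context: $e \rightarrow e'$ denotes immediate causal dependency ($e<e'$ with nothing strictly between). A strategy $\sigma:S\to A$ (between event structures with polarities) is a map of esps which is courteous (if $s_1 \rightarrow s_2$ with $\mathrm{pol}(s_1)=+$ or $\mathrm{pol}(s_2)=-$ then $\sigma s_1 \rightarrow \sigma s_2$) and receptive (for every configuration $x$ of $S$, if $\sigma x$ extends by a negative event $a$ to a configuration, there is a unique $s$ with $x\cup\{s\}$ a configuration and $\sigma s=a$). An arena is a countable esp which is a forest, conflict-free and alternating. $S$ is backward sequential if for every $s\in S$ the set $[s]=\{s'\mid s'\le s\}$ is totally ordered. The composition $\tau\odot\sigma$ is obtained by taking the pullback $(S\parallel C)\circledast(A\parallel T)$ of $\sigma\parallel C$ and $A\parallel\tau$ and projecting onto the events not mapped to $B$. *)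

theory Defs
  imports Main "HOL-Library.Countable_Set"
begin

record 'e esp =
  events   :: "'e set"
  leq      :: "'e \<Rightarrow> 'e \<Rightarrow> bool"
  conflict :: "'e \<Rightarrow> 'e \<Rightarrow> bool"
  pol      :: "'e \<Rightarrow> bool"   (* True = positive, False = negative *)

definition is_es :: "'e esp \<Rightarrow> bool" where
  "is_es E \<longleftrightarrow>
     (\<forall>e e'. leq E e e' \<longrightarrow> e \<in> events E \<and> e' \<in> events E) \<and>
     (\<forall>e\<in>events E. leq E e e) \<and>
     (\<forall>e e'. leq E e e' \<and> leq E e' e \<longrightarrow> e = e') \<and>
     (\<forall>e e' e''. leq E e e' \<and> leq E e' e'' \<longrightarrow> leq E e e'') \<and>
     (\<forall>e\<in>events E. finite {e'. leq E e' e}) \<and>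
     (\<forall>e e'. conflict E e e' \<longrightarrow> e \<in> events E \<and> e' \<in> events E) \<and>
     (\<forall>e. \<not> conflict E e e) \<and>
     (\<forall>e e'. conflict E e e' \<longrightarrow> conflict E e' e) \<and>
     (\<forall>e e' e''. conflict E e e' \<and> leq E e' e'' \<longrightarrow> conflict E e e'')"

definition conf :: "'e esp \<Rightarrow> 'e set \<Rightarrow> bool" where
  "conf E x \<longleftrightarrow> finite x \<and> x \<subseteq> events E \<and>
     (\<forall>e\<in>x. \<forall>e'. leq E e' e \<longrightarrow> e' \<in> x) \<and>
     (\<forall>e\<in>x. \<forall>e'\<in>x. \<not> conflict E e e')"

definition imm :: "'e esp \<Rightarrow> 'e \<Rightarrow> 'e \<Rightarrow> bool" where
  "imm E e e' \<longleftrightarrow> leq E e e' \<and> e \<noteq> e' \<and>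
     \<not> (\<exists>e''. leq E e e'' \<and> leq E e'' e' \<and> e'' \<noteq> e \<and> e'' \<noteq> e')"

definition es_map :: "'e esp \<Rightarrow> 'f esp \<Rightarrow> ('e \<Rightarrow> 'f) \<Rightarrow> bool" where
  "es_map E F f \<longleftrightarrow> f ` events E \<subseteq> events F \<and>
     (\<forall>x. conf E x \<longrightarrow> conf F (f ` x) \<and> inj_on f x)"

definition esp_map :: "'e esp \<Rightarrow> 'f esp \<Rightarrow> ('e \<Rightarrow> 'f) \<Rightarrow> bool" where
  "esp_map E F f \<longleftrightarrow> es_map E F f \<and> (\<forall>e\<in>events E. pol F (f e) = pol E e)"

definition courteous :: "'e esp \<Rightarrow> 'f esp \<Rightarrow> ('e \<Rightarrow> 'f) \<Rightarrow> bool" where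
  "courteous S A \<sigma> \<longleftrightarrow> (\<forall>s1 s2. imm S s1 s2 \<and> (pol S s1 \<or> \<not> pol S s2) \<longrightarrow> imm A (\<sigma> s1) (\<sigma> s2))"

definition receptive :: "'e esp \<Rightarrow> 'f esp \<Rightarrow> ('e \<Rightarrow> 'f) \<Rightarrow> bool" where
  "receptive S A \<sigma> \<longleftrightarrow> (\<forall>x a. conf S x \<and> a \<notin> \<sigma> ` x \<and> conf A (insert a (\<sigma> ` x)) \<and> \<not> pol A a
       \<longrightarrow> (\<exists>!s. conf S (insert s x) \<and> s \<notin> x \<and> \<sigma> s = a))"

definition strategy :: "'e esp \<Rightarrow> 'f esp \<Rightarrow> ('e \<Rightarrow> 'f) \<Rightarrow> bool" where
  "strategy S A \<sigma> \<longleftrightarrow> is_es S \<and> is_es A \<and> esp_map S A \<sigma> \<and> courteous S A \<sigma> \<and> receptive S A \<sigma>"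

definition backward_sequential :: "'e esp \<Rightarrow> bool" where
  "backward_sequential E \<longleftrightarrow>
     (\<forall>e\<in>events E. \<forall>e1 e2. leq E e1 e \<and> leq E e2 e \<longrightarrow> leq E e1 e2 \<or> leq E e2 e1)"

definition dual :: "'e esp \<Rightarrow> 'e esp" where
  "dual A = A\<lparr>pol := (\<lambda>e. \<not> pol A e)\<rparr>"

definition par :: "'a esp \<Rightarrow> 'b esp \<Rightarrow> ('a + 'b) esp" where
  "par A B = \<lparr> events = Inl ` events A \<union> Inr ` events B,
      leq = (\<lambda>u v. case (u, v) of (Inl a, Inl a') \<Rightarrow> leq A a a'
                                | (Inr b, Inr b') \<Rightarrow> leq B b b' | _ \<Rightarrow> False),
      conflict = (\<lambda>u v. case (u, v) of (Inl a, Inl a') \<Rightarrow> conflict A a a'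
                                | (Inr b, Inr b') \<Rightarrow> conflict B b b' | _ \<Rightarrow> False),
      pol = case_sum (pol A) (pol B) \<rparr>"

definition arena :: "'a esp \<Rightarrow> bool" where
  "arena A \<longleftrightarrow> is_es A \<and> countable (events A) \<and>
     (\<forall>e\<in>events A. \<forall>e1 e2. leq A e1 e \<and> leq A e2 e \<longrightarrow> leq A e1 e2 \<or> leq A e2 e1) \<and>
     (\<forall>e e'. \<not> conflict A e e') \<and>
     (\<forall>e e'. imm A e e' \<longrightarrow> pol A e \<noteq> pol A e')"

definition sec_rel :: "'x esp \<Rightarrow> 'y esp \<Rightarrow> ('x \<times> 'y) set \<Rightarrow> (('x \<times> 'y) \<times> ('x \<times> 'y)) set" where
  "sec_rel X Y \<phi> = {(u, v). u \<in> \<phi> \<and> v \<in> \<phi> \<and> (leq X (fst u) (fst v) \<or> leq Y (snd u) (snd v))}"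

definition secured_bij :: "'x esp \<Rightarrow> 'y esp \<Rightarrow> ('x \<Rightarrow> 'g) \<Rightarrow> ('y \<Rightarrow> 'g) \<Rightarrow> ('x \<times> 'y) set \<Rightarrow> bool" where
  "secured_bij X Y f g \<phi> \<longleftrightarrow> conf X (fst ` \<phi>) \<and> conf Y (snd ` \<phi>) \<and>
     (\<forall>u\<in>\<phi>. \<forall>v\<in>\<phi>. fst u = fst v \<longleftrightarrow> snd u = snd v) \<and>
     (\<forall>u\<in>\<phi>. f (fst u) = g (snd u)) \<and>
     (\<forall>u v. (u, v) \<in> (sec_rel X Y \<phi>)\<^sup>+ \<and> (v, u) \<in> (sec_rel X Y \<phi>)\<^sup>+ \<longrightarrow> u = v)"

definition is_top :: "'x esp \<Rightarrow> 'y esp \<Rightarrow> ('x \<times> 'y) set \<Rightarrow> ('x \<times> 'y) \<Rightarrow> bool" where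
  "is_top X Y \<phi> u \<longleftrightarrow> u \<in> \<phi> \<and> (\<forall>v\<in>\<phi>. (v, u) \<in> (sec_rel X Y \<phi>)\<^sup>*)"

definition top_of :: "'x esp \<Rightarrow> 'y esp \<Rightarrow> ('x \<times> 'y) set \<Rightarrow> ('x \<times> 'y)" where
  "top_of X Y \<phi> = (THE u. is_top X Y \<phi> u)"

text \<open>The pullback of f and g in ES: events are prime secured bijections,
  order is inclusion, conflict is incompatibility. (Polarity is irrelevant here.)\<close>
definition interaction :: "'x esp \<Rightarrow> 'y esp \<Rightarrow> ('x \<Rightarrow> 'g) \<Rightarrow> ('y \<Rightarrow> 'g) \<Rightarrow> ('x \<times> 'y) set esp" where
  "interaction X Y f g =
    (let Ev = {\<phi>. secured_bij X Y f g \<phi> \<and> (\<exists>u. is_top X Y \<phi> u)} in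
     \<lparr> events = Ev,
       leq = (\<lambda>\<phi> \<psi>. \<phi> \<in> Ev \<and> \<psi> \<in> Ev \<and> \<phi> \<subseteq> \<psi>),
       conflict = (\<lambda>\<phi> \<psi>. \<phi> \<in> Ev \<and> \<psi> \<in> Ev \<and> \<not> secured_bij X Y f g (\<phi> \<union> \<psi>)),
       pol = (\<lambda>_. False) \<rparr>)"

text \<open>sigma || C and A || tau, both landing in A || (B || C).\<close>
definition sig_par :: "('s \<Rightarrow> 'a + 'b) \<Rightarrow> ('s + 'c) \<Rightarrow> 'a + ('b + 'c)" where
  "sig_par \<sigma> = case_sum (\<lambda>s. case \<sigma> s of Inl a \<Rightarrow> Inl a | Inr b \<Rightarrow> Inr (Inl b)) (\<lambda>c. Inr (Inr c))"

definition par_tau :: "('t \<Rightarrow> 'b + 'c) \<Rightarrow> ('a + 't) \<Rightarrow> 'a + ('b + 'c)" where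
  "par_tau \<tau> = case_sum Inl (\<lambda>t. Inr (\<tau> t))"

text \<open>Composition tau \<odot> sigma: the pullback (S || C) * (A || T) projected to the events
  not mapped to B, with polarity inherited from A^perp || C.\<close>
definition comp_es :: "'a esp \<Rightarrow> 'b esp \<Rightarrow> 'c esp \<Rightarrow> 's esp \<Rightarrow> 't esp \<Rightarrow>
    ('s \<Rightarrow> 'a + 'b) \<Rightarrow> ('t \<Rightarrow> 'b + 'c) \<Rightarrow> (('s + 'c) \<times> ('a + 't)) set esp" where
  "comp_es A B C S T \<sigma> \<tau> =
    (let X = par S C; Y = par A T;
         P = interaction X Y (sig_par \<sigma>) (par_tau \<tau>);
         lab = (\<lambda>\<phi>. sig_par \<sigma> (fst (top_of X Y \<phi>)));
         V = {\<phi> \<in> events P. \<forall>b. lab \<phi> \<noteq> Inr (Inl b)} in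
     \<lparr> events = V,
       leq = (\<lambda>\<phi> \<psi>. \<phi> \<in> V \<and> \<psi> \<in> V \<and> leq P \<phi> \<psi>),
       conflict = (\<lambda>\<phi> \<psi>. \<phi> \<in> V \<and> \<psi> \<in> V \<and> conflict P \<phi> \<psi>),
       pol = (\<lambda>\<phi>. case lab \<phi> of Inl a \<Rightarrow> \<not> pol A a | Inr (Inr c) \<Rightarrow> pol C c | Inr (Inl b) \<Rightarrow> False) \<rparr>)"

definition comp_map :: "'a esp \<Rightarrow> 'b esp \<Rightarrow> 'c esp \<Rightarrow> 's esp \<Rightarrow> 't esp \<Rightarrow>
    ('s \<Rightarrow> 'a + 'b) \<Rightarrow> ('t \<Rightarrow> 'b + 'c) \<Rightarrow> (('s + 'c) \<times> ('a + 't)) set \<Rightarrow> 'a + 'c" where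
  "comp_map A B C S T \<sigma> \<tau> \<phi> =
    (case sig_par \<sigma> (fst (top_of (par S C) (par A T) \<phi>)) of
       Inl a \<Rightarrow> Inl a | Inr (Inr c) \<Rightarrow> Inr c | Inr (Inl b) \<Rightarrow> undefined)"

end

theory Submission
  imports Defs
begin

text \<open>
  An event of \<open>\<tau> \<odot> \<sigma>\<close> is a prime secured bijection \<open>\<phi>\<close> between configurations of \<open>S \<parallel> C\<close>
  and \<open>A \<parallel> T\<close>, and the events below it are the prime secured bijections contained in \<open>\<phi>\<close>.
  Let \<open>R\<close> relate two pairs of \<open>\<phi>\<close> that are ordered in the first or in the second component.
  A prime sub-bijection is the \<open>R\<^sup>*\<close>-down-set of its top, so it suffices that \<open>\<phi>\<close> is totally
  ordered by \<open>R\<^sup>*\<close>. As \<open>S \<parallel> C\<close> and \<open>A \<parallel> T\<close> are forests, a pair \<open>w\<close> has at most two candidate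
  immediate predecessors: the pair whose first component is the parent of the first component
  of \<open>w\<close>, and likewise for the second component. These two candidates are \<open>R\<close>-related: for a
  move of \<open>A\<close> or \<open>C\<close> this is read off the labels, for a move of \<open>B\<close> it follows from courtesy
  of whichever of \<open>\<sigma>\<close>, \<open>\<tau>\<close> sees the move as negative. Hence all strict \<open>R\<close>-predecessors of
  \<open>w\<close> lie below a single pair, and well-founded induction along the finite acyclic relation \<open>R\<close>
  shows that every \<open>R\<^sup>*\<close>-down-set is a chain.
\<close>

lemma par_simps [simp]:
  "events (par E F) = Inl ` events E \<union> Inr ` events F"
  "leq (par E F) (Inl a) (Inl a') = leq E a a'"
  "leq (par E F) (Inr b) (Inr b') = leq F b b'"
  "leq (par E F) (Inl a) (Inr b) = False"
  "leq (par E F) (Inr b) (Inl a) = False"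
  "conflict (par E F) (Inl a) (Inl a') = conflict E a a'"
  "conflict (par E F) (Inr b) (Inr b') = conflict F b b'"
  "conflict (par E F) (Inl a) (Inr b) = False"
  "conflict (par E F) (Inr b) (Inl a) = False"
  "pol (par E F) (Inl a) = pol E a"
  "pol (par E F) (Inr b) = pol F b"
  by (simp_all add: par_def)

lemma dual_simps [simp]:
  "events (dual A) = events A" "leq (dual A) = leq A"
  "conflict (dual A) = conflict A" "pol (dual A) e = (\<not> pol A e)"
  by (simp_all add: dual_def)

lemma sig_par_simps [simp]:
  "sig_par \<sigma> (Inl s) = map_sum id Inl (\<sigma> s)"
  "sig_par \<sigma> (Inr c) = Inr (Inr c)"
  "par_tau \<tau> (Inl a) = Inl a"
  "par_tau \<tau> (Inr t) = Inr (\<tau> t)"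
  by (simp_all add: sig_par_def par_tau_def split: sum.split)

lemma map_sum_id_Inl_eq_iff [simp]:
  "map_sum id Inl y = Inl a \<longleftrightarrow> y = Inl a"
  "map_sum id Inl y = Inr (Inl b) \<longleftrightarrow> y = Inr b"
  "map_sum id Inl y \<noteq> Inr (Inr c)" "Inr (Inr c) \<noteq> map_sum id Inl y"
  "map_sum id Inl y = map_sum id Inl y' \<longleftrightarrow> y = y'"
  by (cases y; cases y'; simp)+

lemma leq_par_Inl_iff: "leq (par E F) z (Inl a) \<longleftrightarrow> (\<exists>z'. z = Inl z' \<and> leq E z' a)"
  by (cases z) auto

lemma leq_par_Inr_iff: "leq (par E F) z (Inr b) \<longleftrightarrow> (\<exists>z'. z = Inr z' \<and> leq F z' b)"
  by (cases z) auto

lemma leq_par_iff: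
  "leq (par E F) u v \<longleftrightarrow>
     (\<exists>a a'. u = Inl a \<and> v = Inl a' \<and> leq E a a') \<or> (\<exists>b b'. u = Inr b \<and> v = Inr b' \<and> leq F b b')"
  by (cases u; cases v) auto

lemma conflict_par_iff:
  "conflict (par E F) u v \<longleftrightarrow>
     (\<exists>a a'. u = Inl a \<and> v = Inl a' \<and> conflict E a a') \<or> (\<exists>b b'. u = Inr b \<and> v = Inr b' \<and> conflict F b b')"
  by (cases u; cases v) auto

lemma is_esD:
  assumes "is_es E"
  shows "leq E e e' \<Longrightarrow> e \<in> events E" "leq E e e' \<Longrightarrow> e' \<in> events E"
    and "e \<in> events E \<Longrightarrow> leq E e e"
    and "leq E e e' \<Longrightarrow> leq E e' e \<Longrightarrow> e = e'"
    and "leq E e e' \<Longrightarrow> leq E e' e'' \<Longrightarrow> leq E e e''"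
    and "e \<in> events E \<Longrightarrow> finite {e'. leq E e' e}"
    and "conflict E e e' \<Longrightarrow> e \<in> events E" "conflict E e e' \<Longrightarrow> e' \<in> events E"
    and "\<not> conflict E e e"
    and "conflict E e e' \<Longrightarrow> conflict E e' e"
    and "conflict E e e' \<Longrightarrow> leq E e' e'' \<Longrightarrow> conflict E e e''"
  using assms unfolding is_es_def by blast+

lemma is_es_par:
  assumes E: "is_es E" and F: "is_es F"
  shows "is_es (par E F)"
proof -
  have "{z. leq (par E F) z u} =
      (case u of Inl a \<Rightarrow> Inl ` {z. leq E z a} | Inr b \<Rightarrow> Inr ` {z. leq F z b})" for u
    by (cases u) (auto simp: leq_par_Inl_iff leq_par_Inr_iff)
  then have "\<forall>u\<in>events (par E F). finite {z. leq (par E F) z u}"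
    using is_esD(6)[OF E] is_esD(6)[OF F] by auto
  moreover have "\<forall>u v. leq (par E F) u v \<longrightarrow> u \<in> events (par E F) \<and> v \<in> events (par E F)"
    by (auto simp: leq_par_iff dest: is_esD(1,2)[OF E] is_esD(1,2)[OF F])
  moreover have "\<forall>u\<in>events (par E F). leq (par E F) u u"
    by (auto intro: is_esD(3)[OF E] is_esD(3)[OF F])
  moreover have "\<forall>u v. leq (par E F) u v \<and> leq (par E F) v u \<longrightarrow> u = v"
    by (auto simp: leq_par_iff dest: is_esD(4)[OF E] is_esD(4)[OF F])
  moreover have "\<forall>u v w. leq (par E F) u v \<and> leq (par E F) v w \<longrightarrow> leq (par E F) u w"
    by (auto simp: leq_par_iff intro: is_esD(5)[OF E] is_esD(5)[OF F])
  moreover have "\<forall>u v. conflict (par E F) u v \<longrightarrow> u \<in> events (par E F) \<and> v \<in> events (par E F)"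
    by (auto simp: conflict_par_iff dest: is_esD(7,8)[OF E] is_esD(7,8)[OF F])
  moreover have "\<forall>u. \<not> conflict (par E F) u u"
    using is_esD(9)[OF E] is_esD(9)[OF F] by (auto simp: conflict_par_iff)
  moreover have "\<forall>u v. conflict (par E F) u v \<longrightarrow> conflict (par E F) v u"
    by (auto simp: conflict_par_iff intro: is_esD(10)[OF E] is_esD(10)[OF F])
  moreover have "\<forall>u v w. conflict (par E F) u v \<and> leq (par E F) v w \<longrightarrow> conflict (par E F) u w"
    by (auto simp: leq_par_iff conflict_par_iff intro: is_esD(11)[OF E] is_esD(11)[OF F])
  ultimately show ?thesis
    unfolding is_es_def by blast
qed

lemma backward_sequential_par:
  assumes "backward_sequential E" "backward_sequential F"
  shows "backward_sequential (par E F)"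
  using assms unfolding backward_sequential_def
  by (auto simp: leq_par_Inl_iff leq_par_Inr_iff) blast+

lemma conf_down_closure:
  assumes "is_es E" "e \<in> events E"
  shows "conf E {z. leq E z e}"
  unfolding conf_def
proof (intro conjI ballI allI impI)
  show "finite {z. leq E z e}" using is_esD(6)[OF assms] .
  show "{z. leq E z e} \<subseteq> events E" using is_esD(1)[OF assms(1)] by blast
  show "z' \<in> {z. leq E z e}" if "z \<in> {z. leq E z e}" "leq E z' z" for z z'
    using that is_esD(5)[OF assms(1)] by blast
  show "\<not> conflict E z z'" if "z \<in> {z. leq E z e}" "z' \<in> {z. leq E z e}" for z z'
    \<comment> \<open>a conflict below \<open>e\<close> is inherited upwards to a self-conflict of \<open>e\<close>\<close>
    using that is_esD(9-11)[OF assms(1)] by blast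
qed

lemma conf_downD: "conf E x \<Longrightarrow> e \<in> x \<Longrightarrow> leq E e' e \<Longrightarrow> e' \<in> x"
  unfolding conf_def by blast

lemma es_map_down:
  assumes "is_es E" "es_map E G h" "e \<in> events E" "leq G a (h e)"
  shows "\<exists>e'. leq E e' e \<and> h e' = a"
proof -
  have "conf G (h ` {z. leq E z e})"
    using assms(2) conf_down_closure[OF assms(1,3)] unfolding es_map_def by blast
  moreover have "h e \<in> h ` {z. leq E z e}"
    using is_esD(3)[OF assms(1,3)] by blast
  ultimately have "a \<in> h ` {z. leq E z e}"
    using assms(4) by (rule conf_downD)
  then show ?thesis by blast
qed

lemma finite_total_has_greatest:
  assumes "finite D" "D \<noteq> {}" "\<forall>x\<in>D. \<forall>y\<in>D. r x y \<or> r y x"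
    and trans: "\<And>x y z. r x y \<Longrightarrow> r y z \<Longrightarrow> r x z"
  shows "\<exists>m\<in>D. \<forall>z\<in>D. r z m"
  using assms(1-3)
proof (induction D rule: finite_ne_induct)
  case (singleton x)
  then show ?case by blast
next
  case (insert x F)
  then obtain m where m: "m \<in> F" "\<forall>z\<in>F. r z m" by blast
  show ?case
  proof (cases "r x m")
    case True
    then show ?thesis using m by auto
  next
    case False
    then have "r m x" using insert.prems m(1) by blast
    then show ?thesis using m(2) insert.prems trans by blast
  qed
qed

definition parent :: "'e esp \<Rightarrow> 'e \<Rightarrow> 'e \<Rightarrow> bool" where
  "parent E p e \<longleftrightarrow> leq E p e \<and> p \<noteq> e \<and> (\<forall>z. leq E z e \<and> z \<noteq> e \<longrightarrow> leq E z p)"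

lemma parent_unique: "is_es E \<Longrightarrow> parent E p e \<Longrightarrow> parent E q e \<Longrightarrow> p = q"
  unfolding parent_def is_es_def by blast

lemma parent_imm: "is_es E \<Longrightarrow> parent E p e \<Longrightarrow> imm E p e"
  unfolding parent_def imm_def is_es_def by blast

lemma backward_sequential_parent:
  assumes "is_es E" "backward_sequential E" "e \<in> events E" "leq E z e" "z \<noteq> e"
  shows "\<exists>p. parent E p e"
proof -
  let ?D = "{z. leq E z e \<and> z \<noteq> e}"
  have "finite ?D"
    using is_esD(6)[OF assms(1,3)] by (rule rev_finite_subset) blast
  moreover have "?D \<noteq> {}" using assms(4,5) by blast
  moreover have "\<forall>x\<in>?D. \<forall>y\<in>?D. leq E x y \<or> leq E y x"
    using assms(2,3) unfolding backward_sequential_def by blast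
  ultimately obtain p where "p \<in> ?D" "\<forall>z\<in>?D. leq E z p"
    using finite_total_has_greatest[of ?D "leq E"] is_esD(5)[OF assms(1)] by blast
  then show ?thesis unfolding parent_def by blast
qed

lemma parent_par_Inl: "parent (par E F) q (Inl e) \<Longrightarrow> \<exists>p. q = Inl p \<and> parent E p e"
  unfolding parent_def by (auto simp: leq_par_Inl_iff) (metis sum.inject(1))

lemma parent_par_Inr: "parent (par E F) q (Inr e) \<Longrightarrow> \<exists>p. q = Inr p \<and> parent F p e"
  unfolding parent_def by (auto simp: leq_par_Inr_iff) (metis sum.inject(2))

lemma strategy_parent_imm:
  assumes "strategy S G \<sigma>" "parent S p s" "\<not> pol S s"
  shows "imm G (\<sigma> p) (\<sigma> s)"
  using assms parent_imm[of S p s] unfolding strategy_def courteous_def by blast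

lemma rtrancl_last_strict_step:
  "(x, w) \<in> R\<^sup>* \<Longrightarrow> x = w \<or> (\<exists>v. (v, w) \<in> R \<and> v \<noteq> w \<and> (x, v) \<in> R\<^sup>*)"
proof (induction rule: converse_rtrancl_induct)
  case base
  then show ?case by simp
next
  case (step x y)
  then show ?case
    by (cases "x = w") (auto intro: converse_rtrancl_into_rtrancl)
qed

lemma acyclic_Diff_Id:
  assumes "\<And>u v. (u, v) \<in> R\<^sup>+ \<Longrightarrow> (v, u) \<in> R\<^sup>+ \<Longrightarrow> u = v"
  shows "acyclic (R - Id)"
  unfolding acyclic_def
proof (intro allI notI)
  fix x assume "(x, x) \<in> (R - Id)\<^sup>+"
  then obtain y where "(x, y) \<in> R - Id" "(y, x) \<in> (R - Id)\<^sup>*"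
    by (meson converse_tranclE trancl_into_rtrancl)
  then have "(x, y) \<in> R\<^sup>+" "(y, x) \<in> R\<^sup>+" "x \<noteq> y"
    by (auto dest: rtrancl_mono[THEN subsetD, of "R - Id" R, rotated]
        intro: rtrancl_into_trancl2)
  then show False using assms by blast
qed

lemma rtrancl_down_chain:
  assumes "finite R"
    and antisym: "\<And>u v. (u, v) \<in> R\<^sup>+ \<Longrightarrow> (v, u) \<in> R\<^sup>+ \<Longrightarrow> u = v"
    and pred: "\<And>v w. (v, w) \<in> R \<Longrightarrow> v \<noteq> w \<Longrightarrow>
      \<exists>w1. (w1, w) \<in> R \<and> w1 \<noteq> w \<and> (\<forall>v. (v, w) \<in> R \<and> v \<noteq> w \<longrightarrow> (v, w1) \<in> R\<^sup>*)"
    and "(v1, w) \<in> R\<^sup>*" "(v2, w) \<in> R\<^sup>*"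
  shows "(v1, v2) \<in> R\<^sup>* \<or> (v2, v1) \<in> R\<^sup>*"
proof -
  have "wf (R - Id)"
  proof (rule finite_acyclic_wf)
    show "finite (R - Id)" using assms(1) by simp
    show "acyclic (R - Id)" by (rule acyclic_Diff_Id) (rule antisym)
  qed
  then show ?thesis
    using assms(4,5)
  proof (induction w arbitrary: v1 v2 rule: wf_induct_rule)
    case (less w)
    show ?case
    proof (cases "\<exists>v. (v, w) \<in> R \<and> v \<noteq> w")
      case True
      then obtain w1 where w1: "(w1, w) \<in> R" "w1 \<noteq> w"
        and below_w1: "\<forall>v. (v, w) \<in> R \<and> v \<noteq> w \<longrightarrow> (v, w1) \<in> R\<^sup>*"
        using pred by blast
      have "v = w \<or> (v, w1) \<in> R\<^sup>*" if "(v, w) \<in> R\<^sup>*" for v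
        using rtrancl_last_strict_step[OF that] below_w1 by (blast intro: rtrancl_trans)
      then consider "v1 = w" | "v2 = w" | "(v1, w1) \<in> R\<^sup>*" "(v2, w1) \<in> R\<^sup>*"
        using less.prems by blast
      then show ?thesis
      proof cases
        case 3
        then show ?thesis using less.IH[of w1] w1 by blast
      qed (use less.prems in auto)
    next
      case False
      then have "v1 = w" "v2 = w"
        using rtrancl_last_strict_step[OF less.prems(1)] rtrancl_last_strict_step[OF less.prems(2)]
        by blast+
      then show ?thesis by simp
    qed
  qed
qed

lemma secured_bij_inj_fst: "secured_bij X Y f g \<phi> \<Longrightarrow> inj_on fst \<phi>"
  unfolding secured_bij_def inj_on_def by (auto simp: prod_eq_iff)

lemma secured_bij_inj_snd: "secured_bij X Y f g \<phi> \<Longrightarrow> inj_on snd \<phi>"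
  unfolding secured_bij_def inj_on_def by (auto simp: prod_eq_iff)

lemma sec_rel_mono: "\<psi> \<subseteq> \<phi> \<Longrightarrow> sec_rel X Y \<psi> \<subseteq> sec_rel X Y \<phi>"
  unfolding sec_rel_def by auto

lemma sec_rel_rtrancl_down_closed:
  assumes "inj_on fst \<phi>" "inj_on snd \<phi>" "\<psi> \<subseteq> \<phi>"
    and "conf X (fst ` \<psi>)" "conf Y (snd ` \<psi>)"
    and "(z, z') \<in> (sec_rel X Y \<phi>)\<^sup>*" "z' \<in> \<psi>"
  shows "z \<in> \<psi>"
  using assms(6,7)
proof (induction rule: converse_rtrancl_induct)
  case (step y z)
  then have "y \<in> \<phi>" "z \<in> \<psi>" "leq X (fst y) (fst z) \<or> leq Y (snd y) (snd z)"
    unfolding sec_rel_def by auto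
  then show ?case
  proof (elim disjE)
    assume "leq X (fst y) (fst z)"
    with \<open>z \<in> \<psi>\<close> have "fst y \<in> fst ` \<psi>"
      by (blast intro: conf_downD[OF assms(4)])
    then show ?thesis using assms(1,3) \<open>y \<in> \<phi>\<close> by (auto dest: inj_onD)
  next
    assume "leq Y (snd y) (snd z)"
    with \<open>z \<in> \<psi>\<close> have "snd y \<in> snd ` \<psi>"
      by (blast intro: conf_downD[OF assms(5)])
    then show ?thesis using assms(2,3) \<open>y \<in> \<phi>\<close> by (auto dest: inj_onD)
  qed
qed

lemma secured_subset_if_top_below:
  assumes "inj_on fst \<phi>" "inj_on snd \<phi>"
    and "is_top X Y \<psi>1 u1" "\<psi>1 \<subseteq> \<phi>"
    and "secured_bij X Y f g \<psi>2" "is_top X Y \<psi>2 u2" "\<psi>2 \<subseteq> \<phi>"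
    and "(u1, u2) \<in> (sec_rel X Y \<phi>)\<^sup>*"
  shows "\<psi>1 \<subseteq> \<psi>2"
proof
  fix v assume "v \<in> \<psi>1"
  then have "(v, u1) \<in> (sec_rel X Y \<phi>)\<^sup>*"
    using assms(3) rtrancl_mono[OF sec_rel_mono[OF assms(4)]] unfolding is_top_def by blast
  then have "(v, u2) \<in> (sec_rel X Y \<phi>)\<^sup>*"
    using assms(8) by (rule rtrancl_trans)
  then show "v \<in> \<psi>2"
    using sec_rel_rtrancl_down_closed[OF assms(1,2,7)] assms(5,6)
    unfolding secured_bij_def is_top_def by blast
qed

lemma prime_secured_subsets_comparable:
  assumes "secured_bij X Y f g \<phi>"
    and total: "\<forall>v1\<in>\<phi>. \<forall>v2\<in>\<phi>. (v1, v2) \<in> (sec_rel X Y \<phi>)\<^sup>* \<or> (v2, v1) \<in> (sec_rel X Y \<phi>)\<^sup>*"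
    and "secured_bij X Y f g \<psi>1" "is_top X Y \<psi>1 u1" "\<psi>1 \<subseteq> \<phi>"
    and "secured_bij X Y f g \<psi>2" "is_top X Y \<psi>2 u2" "\<psi>2 \<subseteq> \<phi>"
  shows "\<psi>1 \<subseteq> \<psi>2 \<or> \<psi>2 \<subseteq> \<psi>1"
proof -
  note inj = secured_bij_inj_fst[OF assms(1)] secured_bij_inj_snd[OF assms(1)]
  have "u1 \<in> \<phi>" "u2 \<in> \<phi>" using assms(4,5,7,8) unfolding is_top_def by blast+
  then show ?thesis
    using total secured_subset_if_top_below[OF inj assms(4,5,6,7,8)]
      secured_subset_if_top_below[OF inj assms(7,8,3,4,5)] by blast
qed

lemma conf_par_Inl:
  assumes "conf (par E F) x"
  shows "conf E (Inl -` x)"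
proof -
  have "finite x" "x \<subseteq> events (par E F)" "\<forall>u\<in>x. \<forall>u'. leq (par E F) u' u \<longrightarrow> u' \<in> x"
    "\<forall>u\<in>x. \<forall>u'\<in>x. \<not> conflict (par E F) u u'"
    using assms unfolding conf_def by blast+
  then show ?thesis
    unfolding conf_def by (auto simp: finite_vimageI) (metis par_simps(6))
qed

lemma inj_on_sig_par:
  assumes "es_map S G \<sigma>" "conf (par S C) x"
  shows "inj_on (sig_par \<sigma>) x"
proof (rule inj_onI)
  have inj: "inj_on \<sigma> (Inl -` x)"
    using assms conf_par_Inl unfolding es_map_def by blast
  fix u v assume "u \<in> x" "v \<in> x" "sig_par \<sigma> u = sig_par \<sigma> v"
  then show "u = v"
    by (cases u; cases v) (auto split: sum.splits dest: inj_onD[OF inj])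
qed

locale secured_interaction =
  fixes A :: "'a esp" and B :: "'b esp" and C :: "'c esp"
    and S :: "'s esp" and T :: "'t esp"
    and \<sigma> :: "'s \<Rightarrow> 'a + 'b" and \<tau> :: "'t \<Rightarrow> 'b + 'c"
    and \<phi> :: "(('s + 'c) \<times> ('a + 't)) set"
  assumes es_A: "is_es A" and bs_A: "backward_sequential A"
    and es_C: "is_es C" and bs_C: "backward_sequential C"
    and strategy_\<sigma>: "strategy S (par (dual A) B) \<sigma>" and bs_S: "backward_sequential S"
    and strategy_\<tau>: "strategy T (par (dual B) C) \<tau>" and bs_T: "backward_sequential T"
    and secured: "secured_bij (par S C) (par A T) (sig_par \<sigma>) (par_tau \<tau>) \<phi>"
begin

abbreviation "X \<equiv> par S C"
abbreviation "Y \<equiv> par A T"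
abbreviation "R \<equiv> sec_rel X Y \<phi>"
abbreviation "lab u \<equiv> sig_par \<sigma> (fst u)"

lemma es_S: "is_es S" and es_T: "is_es T"
  using strategy_\<sigma> strategy_\<tau> unfolding strategy_def by blast+

lemma es_map_\<sigma>: "es_map S (par (dual A) B) \<sigma>" and es_map_\<tau>: "es_map T (par (dual B) C) \<tau>"
  using strategy_\<sigma> strategy_\<tau> unfolding strategy_def esp_map_def by blast+

lemma pol_\<sigma>: "s \<in> events S \<Longrightarrow> pol (par (dual A) B) (\<sigma> s) = pol S s"
  using strategy_\<sigma> unfolding strategy_def esp_map_def by blast

lemma pol_\<tau>: "t \<in> events T \<Longrightarrow> pol (par (dual B) C) (\<tau> t) = pol T t"
  using strategy_\<tau> unfolding strategy_def esp_map_def by blast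

lemma es_X: "is_es X" and es_Y: "is_es Y"
  using is_es_par es_S es_C es_A es_T by blast+

lemma bs_X: "backward_sequential X" and bs_Y: "backward_sequential Y"
  using backward_sequential_par bs_S bs_C bs_A bs_T by blast+

lemma conf_X: "conf X (fst ` \<phi>)" and conf_Y: "conf Y (snd ` \<phi>)"
  using secured unfolding secured_bij_def by blast+

lemma inj_fst: "inj_on fst \<phi>" and inj_snd: "inj_on snd \<phi>"
  using secured_bij_inj_fst[OF secured] secured_bij_inj_snd[OF secured] .

lemma lab_snd: "u \<in> \<phi> \<Longrightarrow> lab u = par_tau \<tau> (snd u)"
  using secured unfolding secured_bij_def by blast

lemma lab_inj: "u \<in> \<phi> \<Longrightarrow> v \<in> \<phi> \<Longrightarrow> lab u = lab v \<Longrightarrow> u = v"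
  using inj_on_sig_par[OF es_map_\<sigma> conf_X] inj_fst by (auto dest: inj_onD)

lemma fst_in_events: "u \<in> \<phi> \<Longrightarrow> fst u \<in> events X"
  using conf_X unfolding conf_def by blast

lemma snd_in_events: "u \<in> \<phi> \<Longrightarrow> snd u \<in> events Y"
  using conf_Y unfolding conf_def by blast

lemma fst_down: "u \<in> \<phi> \<Longrightarrow> leq X x (fst u) \<Longrightarrow> \<exists>v\<in>\<phi>. fst v = x"
  using conf_downD[OF conf_X] by force

lemma snd_down: "u \<in> \<phi> \<Longrightarrow> leq Y y (snd u) \<Longrightarrow> \<exists>v\<in>\<phi>. snd v = y"
  using conf_downD[OF conf_Y] by force

lemma R_iff: "(v, w) \<in> R \<longleftrightarrow> v \<in> \<phi> \<and> w \<in> \<phi> \<and> (leq X (fst v) (fst w) \<or> leq Y (snd v) (snd w))"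
  unfolding sec_rel_def by auto

lemma fst_below_if_label_below:
  assumes "w \<in> \<phi>" "u \<in> \<phi>" "fst w = Inl s"
    and "leq (par (dual A) B) \<gamma> (\<sigma> s)" "\<gamma> \<noteq> \<sigma> s" "lab u = map_sum id Inl \<gamma>"
  shows "leq X (fst u) (fst w) \<and> fst u \<noteq> fst w"
proof -
  have "s \<in> events S" using fst_in_events[OF assms(1)] assms(3) by auto
  then obtain s' where s': "leq S s' s" "\<sigma> s' = \<gamma>"
    using es_map_down[OF es_S es_map_\<sigma> _ assms(4)] by blast
  then obtain v where v: "v \<in> \<phi>" "fst v = Inl s'"
    using fst_down[OF assms(1), of "Inl s'"] assms(3) by auto
  then have "v = u" using lab_inj[OF _ assms(2)] s'(2) assms(6) by simp
  then show ?thesis using v s' assms(3,5) by auto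
qed

lemma snd_below_if_label_below:
  assumes "w \<in> \<phi>" "u \<in> \<phi>" "snd w = Inr t"
    and "leq (par (dual B) C) \<gamma> (\<tau> t)" "\<gamma> \<noteq> \<tau> t" "lab u = Inr \<gamma>"
  shows "leq Y (snd u) (snd w) \<and> snd u \<noteq> snd w"
proof -
  have "t \<in> events T" using snd_in_events[OF assms(1)] assms(3) by auto
  then obtain t' where t': "leq T t' t" "\<tau> t' = \<gamma>"
    using es_map_down[OF es_T es_map_\<tau> _ assms(4)] by blast
  then obtain v where v: "v \<in> \<phi>" "snd v = Inr t'"
    using snd_down[OF assms(1), of "Inr t'"] assms(3) by auto
  then have "v = u" using lab_inj[OF _ assms(2)] lab_snd t'(2) assms(6) by simp
  then show ?thesis using v t' assms(3,5) by auto
qed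

lemma A_move_pred:
  assumes "w \<in> \<phi>" "u \<in> \<phi>" "lab w = Inl a"
    and "leq Y (snd u) (snd w)" "snd u \<noteq> snd w"
  shows "leq X (fst u) (fst w) \<and> fst u \<noteq> fst w"
proof -
  obtain s where s: "fst w = Inl s" "\<sigma> s = Inl a"
    using assms(3) by (cases "fst w") auto
  have "snd w = Inl a" using lab_snd[OF assms(1)] assms(3) by (cases "snd w") auto
  then obtain a1 where "snd u = Inl a1" "leq A a1 a" "a1 \<noteq> a"
    using assms(4,5) by (auto simp: leq_par_Inl_iff)
  then show ?thesis
    using fst_below_if_label_below[OF assms(1,2) s(1), of "Inl a1"] s(2) lab_snd[OF assms(2)] by simp
qed

lemma C_move_pred:
  assumes "w \<in> \<phi>" "u \<in> \<phi>" "lab w = Inr (Inr c)"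
    and "leq X (fst u) (fst w)" "fst u \<noteq> fst w"
  shows "leq Y (snd u) (snd w) \<and> snd u \<noteq> snd w"
proof -
  have "fst w = Inr c" using assms(3) by (cases "fst w") auto
  obtain t where t: "snd w = Inr t" "\<tau> t = Inr c"
    using lab_snd[OF assms(1)] assms(3) by (cases "snd w") auto
  obtain c1 where "fst u = Inr c1" "leq C c1 c" "c1 \<noteq> c"
    using assms(4,5) \<open>fst w = Inr c\<close> by (auto simp: leq_par_Inr_iff)
  then show ?thesis
    using snd_below_if_label_below[OF assms(1,2) t(1), of "Inr c1"] t(2) by simp
qed

lemma B_move_negative_pred:
  assumes "w \<in> \<phi>" "wx \<in> \<phi>" "lab w = Inr (Inl b)" "\<not> pol B b"
    and "parent X (fst wx) (fst w)"
  shows "leq Y (snd wx) (snd w) \<and> snd wx \<noteq> snd w"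
proof -
  obtain s where s: "fst w = Inl s" "\<sigma> s = Inr b"
    using assms(3) by (cases "fst w") auto
  obtain t where t: "snd w = Inr t" "\<tau> t = Inl b"
    using lab_snd[OF assms(1)] assms(3) by (cases "snd w") auto
  obtain s1 where s1: "fst wx = Inl s1" "parent S s1 s"
    using parent_par_Inl assms(5) s(1) by fastforce
  have "s \<in> events S" using fst_in_events[OF assms(1)] s(1) by auto
  then have "\<not> pol S s" using pol_\<sigma> s(2) assms(4) by force
  then have "imm (par (dual A) B) (\<sigma> s1) (\<sigma> s)"
    using strategy_parent_imm[OF strategy_\<sigma> s1(2)] by blast
  then obtain b1 where "\<sigma> s1 = Inr b1" "leq B b1 b" "b1 \<noteq> b"
    using s(2) unfolding imm_def by (auto simp: leq_par_Inr_iff)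
  then show ?thesis
    using snd_below_if_label_below[OF assms(1,2) t(1), of "Inl b1"] t(2) s1(1) by simp
qed

lemma B_move_positive_pred:
  assumes "w \<in> \<phi>" "wy \<in> \<phi>" "lab w = Inr (Inl b)" "pol B b"
    and "parent Y (snd wy) (snd w)"
  shows "leq X (fst wy) (fst w) \<and> fst wy \<noteq> fst w"
proof -
  obtain s where s: "fst w = Inl s" "\<sigma> s = Inr b"
    using assms(3) by (cases "fst w") auto
  obtain t where t: "snd w = Inr t" "\<tau> t = Inl b"
    using lab_snd[OF assms(1)] assms(3) by (cases "snd w") auto
  obtain t1 where t1: "snd wy = Inr t1" "parent T t1 t"
    using parent_par_Inr assms(5) t(1) by fastforce
  have "t \<in> events T" using snd_in_events[OF assms(1)] t(1) by auto
  then have "\<not> pol T t" using pol_\<tau> t(2) assms(4) by force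
  then have "imm (par (dual B) C) (\<tau> t1) (\<tau> t)"
    using strategy_parent_imm[OF strategy_\<tau> t1(2)] by blast
  then obtain b1 where "\<tau> t1 = Inl b1" "leq B b1 b" "b1 \<noteq> b"
    using t(2) unfolding imm_def by (auto simp: leq_par_Inl_iff)
  then show ?thesis
    using fst_below_if_label_below[OF assms(1,2) s(1), of "Inr b1"] s(2) lab_snd[OF assms(2)] t1(1)
    by simp
qed

lemma parents_related:
  assumes "w \<in> \<phi>" "wx \<in> \<phi>" "wy \<in> \<phi>"
    and "parent X (fst wx) (fst w)" "parent Y (snd wy) (snd w)"
  shows "(wx, wy) \<in> R \<or> (wy, wx) \<in> R"
proof -
  have "(leq Y (snd wx) (snd w) \<and> snd wx \<noteq> snd w) \<or> (leq X (fst wy) (fst w) \<and> fst wy \<noteq> fst w)"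
  proof (cases "lab w")
    case (Inl a)
    then show ?thesis using A_move_pred[OF assms(1,3)] assms(5) unfolding parent_def by blast
  next
    case (Inr bc)
    then show ?thesis
    proof (cases bc)
      case (Inl b)
      then show ?thesis
        using B_move_negative_pred[OF assms(1,2)] B_move_positive_pred[OF assms(1,3)] Inr assms(4,5)
        by (cases "pol B b") auto
    next
      case (Inr c)
      then show ?thesis
        using C_move_pred[OF assms(1,2)] \<open>lab w = Inr bc\<close> assms(4) unfolding parent_def by blast
    qed
  qed
  then show ?thesis
    using assms unfolding parent_def R_iff by blast
qed

definition parent_pairs :: "('s + 'c) \<times> ('a + 't) \<Rightarrow> (('s + 'c) \<times> ('a + 't)) set" where
  "parent_pairs w = {u \<in> \<phi>. parent X (fst u) (fst w) \<or> parent Y (snd u) (snd w)}"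

lemma parent_pair_below: "w \<in> \<phi> \<Longrightarrow> u \<in> parent_pairs w \<Longrightarrow> (u, w) \<in> R \<and> u \<noteq> w"
  unfolding parent_pairs_def parent_def R_iff by auto

lemma strict_pred_below_parent_pair:
  assumes "(v, w) \<in> R" "v \<noteq> w"
  shows "\<exists>u\<in>parent_pairs w. (v, u) \<in> R"
proof -
  have vw: "v \<in> \<phi>" "w \<in> \<phi>" using assms(1) R_iff by blast+
  then have "fst v \<noteq> fst w" "snd v \<noteq> snd w"
    using assms(2) inj_fst inj_snd by (auto dest: inj_onD)
  with assms(1) consider "leq X (fst v) (fst w)" "fst v \<noteq> fst w"
    | "leq Y (snd v) (snd w)" "snd v \<noteq> snd w"
    using R_iff by blast
  then show ?thesis
  proof cases
    case 1
    then obtain p where p: "parent X p (fst w)"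
      using backward_sequential_parent[OF es_X bs_X fst_in_events[OF vw(2)]] by blast
    then obtain u where "u \<in> \<phi>" "fst u = p"
      using fst_down[OF vw(2)] unfolding parent_def by blast
    then show ?thesis
      using p 1 vw(1) unfolding parent_pairs_def parent_def R_iff by blast
  next
    case 2
    then obtain p where p: "parent Y p (snd w)"
      using backward_sequential_parent[OF es_Y bs_Y snd_in_events[OF vw(2)]] by blast
    then obtain u where "u \<in> \<phi>" "snd u = p"
      using snd_down[OF vw(2)] unfolding parent_def by blast
    then show ?thesis
      using p 2 vw(1) unfolding parent_pairs_def parent_def R_iff by blast
  qed
qed

lemma parent_pairs_total:
  assumes "w \<in> \<phi>" "u1 \<in> parent_pairs w" "u2 \<in> parent_pairs w"
  shows "(u1, u2) \<in> R\<^sup>* \<or> (u2, u1) \<in> R\<^sup>*"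
proof -
  have "u1 \<in> \<phi>" "u2 \<in> \<phi>" using assms(2,3) unfolding parent_pairs_def by blast+
  have "u1 = u2 \<or> (u1, u2) \<in> R \<or> (u2, u1) \<in> R"
    using assms(2,3) unfolding parent_pairs_def
  proof (elim CollectE conjE disjE)
    assume "parent X (fst u1) (fst w)" "parent X (fst u2) (fst w)"
    then show ?thesis
      using parent_unique[OF es_X] inj_fst \<open>u1 \<in> \<phi>\<close> \<open>u2 \<in> \<phi>\<close> by (blast dest: inj_onD)
  next
    assume "parent Y (snd u1) (snd w)" "parent Y (snd u2) (snd w)"
    then show ?thesis
      using parent_unique[OF es_Y] inj_snd \<open>u1 \<in> \<phi>\<close> \<open>u2 \<in> \<phi>\<close> by (blast dest: inj_onD)
  qed (use parents_related assms(1) \<open>u1 \<in> \<phi>\<close> \<open>u2 \<in> \<phi>\<close> in blast)+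
  then show ?thesis by blast
qed

lemma finite_\<phi>: "finite \<phi>"
proof -
  have "finite (fst ` \<phi>)" using conf_X unfolding conf_def by blast
  then show ?thesis using inj_fst by (rule finite_imageD)
qed

lemma strict_preds_have_greatest:
  assumes "(v, w) \<in> R" "v \<noteq> w"
  shows "\<exists>w1. (w1, w) \<in> R \<and> w1 \<noteq> w \<and> (\<forall>v. (v, w) \<in> R \<and> v \<noteq> w \<longrightarrow> (v, w1) \<in> R\<^sup>*)"
proof -
  have w: "w \<in> \<phi>" using assms(1) R_iff by blast
  have "\<exists>m\<in>parent_pairs w. \<forall>u\<in>parent_pairs w. (u, m) \<in> R\<^sup>*"
  proof (rule finite_total_has_greatest)
    show "finite (parent_pairs w)"
      using finite_\<phi> unfolding parent_pairs_def by simp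
    show "parent_pairs w \<noteq> {}"
      using strict_pred_below_parent_pair[OF assms] by blast
  qed (use parent_pairs_total[OF w] in \<open>blast intro: rtrancl_trans\<close>)+
  then obtain m where m: "m \<in> parent_pairs w" "\<forall>u\<in>parent_pairs w. (u, m) \<in> R\<^sup>*" ..
  have "(v', m) \<in> R\<^sup>*" if "(v', w) \<in> R" "v' \<noteq> w" for v'
    using strict_pred_below_parent_pair[OF that] m(2) by (blast intro: converse_rtrancl_into_rtrancl)
  then show ?thesis
    using parent_pair_below[OF w m(1)] by blast
qed

lemma down_chain:
  assumes "(v1, w) \<in> R\<^sup>*" "(v2, w) \<in> R\<^sup>*"
  shows "(v1, v2) \<in> R\<^sup>* \<or> (v2, v1) \<in> R\<^sup>*"
proof -
  have "R \<subseteq> \<phi> \<times> \<phi>" by (auto simp: R_iff)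
  then have "finite R" using finite_subset finite_\<phi> by blast
  moreover have "\<And>u v. (u, v) \<in> R\<^sup>+ \<Longrightarrow> (v, u) \<in> R\<^sup>+ \<Longrightarrow> u = v"
    using secured unfolding secured_bij_def by blast
  ultimately show ?thesis
    using strict_preds_have_greatest assms by (rule rtrancl_down_chain)
qed

lemma prime_total:
  assumes "is_top X Y \<phi> u"
  shows "\<forall>v1\<in>\<phi>. \<forall>v2\<in>\<phi>. (v1, v2) \<in> R\<^sup>* \<or> (v2, v1) \<in> R\<^sup>*"
proof (intro ballI)
  fix v1 v2 assume "v1 \<in> \<phi>" "v2 \<in> \<phi>"
  then have "(v1, u) \<in> R\<^sup>*" "(v2, u) \<in> R\<^sup>*" using assms unfolding is_top_def by blast+
  then show "(v1, v2) \<in> R\<^sup>* \<or> (v2, v1) \<in> R\<^sup>*" by (rule down_chain)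
qed

end

lemma arena_backward_sequential: "arena A \<Longrightarrow> is_es A \<and> backward_sequential A"
  unfolding arena_def backward_sequential_def by blast

lemma leq_comp_es_iff:
  "leq (comp_es A B C S T \<sigma> \<tau>) p q \<longleftrightarrow>
     p \<in> events (comp_es A B C S T \<sigma> \<tau>) \<and> q \<in> events (comp_es A B C S T \<sigma> \<tau>) \<and> p \<subseteq> q"
  unfolding comp_es_def Let_def interaction_def by auto

lemma events_comp_esD:
  "p \<in> events (comp_es A B C S T \<sigma> \<tau>) \<Longrightarrow>
     secured_bij (par S C) (par A T) (sig_par \<sigma>) (par_tau \<tau>) p \<and> (\<exists>u. is_top (par S C) (par A T) p u)"
  unfolding comp_es_def Let_def interaction_def by auto

theorem mainTheorem6:
  fixes A :: "'a esp" and B :: "'b esp" and C :: "'c esp"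
    and S :: "'s esp" and T :: "'t esp"
    and \<sigma> :: "'s \<Rightarrow> 'a + 'b" and \<tau> :: "'t \<Rightarrow> 'b + 'c"
  assumes "arena A" and "arena B" and "arena C"
    and "strategy S (par (dual A) B) \<sigma>" and "backward_sequential S"
    and "strategy T (par (dual B) C) \<tau>" and "backward_sequential T"
  shows "backward_sequential (comp_es A B C S T \<sigma> \<tau>)"
  unfolding backward_sequential_def
proof (intro ballI allI impI)
  let ?E = "comp_es A B C S T \<sigma> \<tau>" and ?X = "par S C" and ?Y = "par A T"
  fix e e1 e2
  assume "leq ?E e1 e \<and> leq ?E e2 e"
  then have in_E: "e \<in> events ?E" "e1 \<in> events ?E" "e2 \<in> events ?E" and "e1 \<subseteq> e" "e2 \<subseteq> e"
    unfolding leq_comp_es_iff by blast+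
  obtain u where u: "is_top ?X ?Y e u"
    using events_comp_esD[OF in_E(1)] by blast
  obtain u1 where e1: "secured_bij ?X ?Y (sig_par \<sigma>) (par_tau \<tau>) e1" "is_top ?X ?Y e1 u1"
    using events_comp_esD[OF in_E(2)] by blast
  obtain u2 where e2: "secured_bij ?X ?Y (sig_par \<sigma>) (par_tau \<tau>) e2" "is_top ?X ?Y e2 u2"
    using events_comp_esD[OF in_E(3)] by blast
  interpret secured_interaction A B C S T \<sigma> \<tau> e
    using assms(4-7) arena_backward_sequential[OF assms(1)] arena_backward_sequential[OF assms(3)]
      events_comp_esD[OF in_E(1)]
    by unfold_locales auto
  have "e1 \<subseteq> e2 \<or> e2 \<subseteq> e1"
    using prime_secured_subsets_comparable[OF secured prime_total[OF u] e1 \<open>e1 \<subseteq> e\<close> e2 \<open>e2 \<subseteq> e\<close>] .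
  then show "leq ?E e1 e2 \<or> leq ?E e2 e1"
    unfolding leq_comp_es_iff using in_E by blast
qed

end
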